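(* Let $\mathcal{H}=(\mathcal{T},\mathsf{SO})$ be a history and let $\mathcal{G}=(\mathcal{V},\mathcal{E},(\mathcal{C}^{\mathsf{WW}},\mathcal{C}^{\mathsf{WR}}))$ be the hyper-polygraph of $\mathcal{H}$. Then $\mathcal{H}$ satisfies Serializability if and only if $\mathcal{H}$ satisfies $\textsc{Int}$ and there exists an acyclic directed labeled graph that is compatible with $\mathcal{G}$.
   Context: Fix a set of keys $\mathsf{Key}$ and a set of values $\mathsf{Val}$. An operation is a read $\mathsf{R}(x,v)$ or a write $\mathsf{W}(x,v)$ with $x\in\mathsf{Key}$, $v\in\mathsf{Val}$ (each operation carries a unique identifier). A transaction is a pair $(O,\mathsf{po})$ where $O$ is a finite non-empty set of operations and $\mathsf{po}$ (program order) is a strict total order on $O$. A history is a pair $\mathcal{H}=(\mathcal{T},\mathsf{SO})$ where $\mathcal{T}$ is a set of transactions with pairwise disjoint operation sets and $\mathsf{SO}\subseteq\mathcal{T}\times\mathcal{T}$ (session order) is a union of strict total orders on pairwise disjoint subsets of $\mathcal{T}$. Every history contains a special transaction $T_\bot$ that writes the initial value of every key and precedes every other transaction in $\mathsf{SO}$. Notation: $T\vdash \mathsf{W}(x,v)$ means $T$ writes to $x$ and $v$ is the value of its $\mathsf{po}$-last write to $x$; $T\vdash\mathsf{R}(x,v)$ means $T$ reads $x$ before (in $\mathsf{po}$) any write of $T$ to $x$, and $v$ is the value returned by the first such read. $\mathsf{WriteTx}_x=\{T\mid T\vdash\mathsf{W}(x,\_)\}$, where $\_$ denotes an existentially quantified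 value. $\mathcal{H}$ satisfies $\textsc{Int}$ (internal consistency) if in every transaction, every read of a key $x$ that is $\mathsf{po}$-preceded by some operation on $x$ returns the value of the $\mathsf{po}$-latest preceding operation on $x$ (the value written, if a write; the value returned, if a read). $\mathcal{H}$ satisfies Serializability if $\mathcal{H}\models\textsc{Int}$ and there is a strict total order $\prec$ on $\mathcal{T}$ containing $\mathsf{SO}$ such that for every $S\in\mathcal{T}$, key $x$ and value $v$ with $S\vdash\mathsf{R}(x,v)$, the $\prec$-greatest transaction $T\prec S$ with $T\in\mathsf{WriteTx}_x$ satisfies $T\vdash\mathsf{W}(x,v)$. Hyper-polygraph of $\mathcal{H}$: $\mathcal{G}=(\mathcal{V},\mathcal{E},(\mathcal{C}^{\mathsf{WW}},\mathcal{C}^{\mathsf{WR}}))$ where $\mathcal{V}=\mathcal{T}$; edges are tuples $(T,S,\mathsf{t},x)$, written $T\xrightarrow{\mathsf{t}(x)}S$, with type $\mathsf{t}\in\{\mathsf{SO},\mathsf{WR},\mathsf{WW},\mathsf{RW}\}$ and key $x$ (irrelevant for $\mathsf{SO}$); the known edge set $\mathcal{E}$ consists of $T\xrightarrow{\mathsf{SO}}S$ for all $(T,S)\in\mathsf{SO}$, and $T\xrightarrow{\mathsf{WR}(x)}S$ whenever $S\vdash\mathsf{R}(x,v)$ and $T$ is the unique transaction with $T\vdash\mathsf{W}(x,v)$; $\mathcal{C}^{\mathsf{WW}}=\{\{T\xrightarrow{\mathsf{WW}(x)}S,\ S\xrightarrow{\mathsf{WW}(x)}T\}\mid x\in\mathsf{Key},\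 T,S\in\mathsf{WriteTx}_x,\ T\neq S\}$; $\mathcal{C}^{\mathsf{WR}}=\{\{T_i\xrightarrow{\mathsf{WR}(x)}S\mid T_i\vdash\mathsf{W}(x,v)\}\mid S\vdash\mathsf{R}(x,v)\}$. A directed labeled graph $\mathcal{G}'=(\mathcal{V}',\mathcal{E}')$ is compatible with $\mathcal{G}$ if $\mathcal{V}'=\mathcal{V}$; $\mathcal{E}'\supseteq\mathcal{E}$; for all keys $x$ and all $T,T',S\in\mathcal{V}$ with $T\neq S$, if $T'\xrightarrow{\mathsf{WR}(x)}T\in\mathcal{E}'$ and $T'\xrightarrow{\mathsf{WW}(x)}S\in\mathcal{E}'$ then $T\xrightarrow{\mathsf{RW}(x)}S\in\mathcal{E}'$; and $|\mathcal{E}'\cap C|=1$ for every $C\in\mathcal{C}^{\mathsf{WW}}\cup\mathcal{C}^{\mathsf{WR}}$. A labeled graph is acyclic if the underlying relation on vertices (ignoring labels and keys) has no directed cycle, including self-loops. *)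

theory Defs
  imports Main
begin

datatype okind = Rd | Wr

text \<open>An operation: unique identifier, kind (read/write), key, value.
  Keys are the elements of type 'k (the set Key), values those of type 'v (the set Val).\<close>
datatype ('k, 'v) operation = Op (oid: nat) (okind: okind) (okey: 'k) (oval: 'v)

type_synonym ('k, 'v) txn =
  "('k, 'v) operation set \<times> (('k, 'v) operation \<times> ('k, 'v) operation) set"

definition strict_total_on :: "'a set \<Rightarrow> ('a \<times> 'a) set \<Rightarrow> bool" where
  "strict_total_on A r \<longleftrightarrow> r \<subseteq> A \<times> A \<and> irrefl r \<and> trans r \<and>
     (\<forall>a\<in>A. \<forall>b\<in>A. a \<noteq> b \<longrightarrow> (a, b) \<in> r \<or> (b, a) \<in> r)"

definition is_transaction :: "('k, 'v) txn \<Rightarrow> bool" where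
  "is_transaction T \<longleftrightarrow> finite (fst T) \<and> fst T \<noteq> {} \<and> strict_total_on (fst T) (snd T)"

definition writes :: "('k, 'v) txn \<Rightarrow> 'k \<Rightarrow> 'v \<Rightarrow> bool" where
  "writes T x v \<longleftrightarrow> (\<exists>w\<in>fst T. okind w = Wr \<and> okey w = x \<and> oval w = v \<and>
     (\<forall>w'\<in>fst T. okind w' = Wr \<and> okey w' = x \<and> w' \<noteq> w \<longrightarrow> (w', w) \<in> snd T))"

definition reads :: "('k, 'v) txn \<Rightarrow> 'k \<Rightarrow> 'v \<Rightarrow> bool" where
  "reads T x v \<longleftrightarrow> (\<exists>r\<in>fst T. okind r = Rd \<and> okey r = x \<and> oval r = v \<and>
     (\<forall>w\<in>fst T. okind w = Wr \<and> okey w = x \<longrightarrow> (r, w) \<in> snd T) \<and>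
     (\<forall>r'\<in>fst T. okind r' = Rd \<and> okey r' = x \<and> r' \<noteq> r \<longrightarrow> (r, r') \<in> snd T))"

definition WriteTx :: "('k, 'v) txn set \<Rightarrow> 'k \<Rightarrow> ('k, 'v) txn set" where
  "WriteTx \<T> x = {T \<in> \<T>. \<exists>v. writes T x v}"

text \<open>SO is the union of strict total orders on pairwise disjoint subsets (the sessions)
  of the non-initial transactions, together with the edges from Tb to every other
  transaction.\<close>
definition is_history ::
  "('k, 'v) txn set \<Rightarrow> (('k, 'v) txn \<times> ('k, 'v) txn) set \<Rightarrow> ('k, 'v) txn \<Rightarrow> bool" where
  "is_history \<T> SO Tb \<longleftrightarrow>
     finite \<T> \<and> (\<forall>T\<in>\<T>. is_transaction T) \<and>
     (\<forall>T\<in>\<T>. \<forall>S\<in>\<T>. T \<noteq> S \<longrightarrow> fst T \<inter> fst S = {}) \<and>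
     Tb \<in> \<T> \<and> (\<forall>x. \<exists>v. writes Tb x v) \<and>
     (\<exists>P R. (\<forall>A\<in>P. A \<subseteq> \<T> - {Tb}) \<and>
            (\<forall>A\<in>P. \<forall>B\<in>P. A \<noteq> B \<longrightarrow> A \<inter> B = {}) \<and>
            (\<forall>A\<in>P. strict_total_on A (R A)) \<and>
            SO = (\<Union>A\<in>P. R A) \<union> {(Tb, T) | T. T \<in> \<T> \<and> T \<noteq> Tb})"

definition Int_consistent :: "('k, 'v) txn set \<Rightarrow> bool" where
  "Int_consistent \<T> \<longleftrightarrow>
     (\<forall>T\<in>\<T>. \<forall>p\<in>fst T. \<forall>p'\<in>fst T.
        okind p = Rd \<and> okey p' = okey p \<and> (p', p) \<in> snd T \<and>
        (\<forall>p''\<in>fst T. okey p'' = okey p \<and> (p'', p) \<in> snd T \<longrightarrow> p'' = p' \<or> (p'', p') \<in> snd T)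
        \<longrightarrow> oval p = oval p')"

definition serializable ::
  "('k, 'v) txn set \<Rightarrow> (('k, 'v) txn \<times> ('k, 'v) txn) set \<Rightarrow> bool" where
  "serializable \<T> SO \<longleftrightarrow> Int_consistent \<T> \<and>
     (\<exists>ord. strict_total_on \<T> ord \<and> SO \<subseteq> ord \<and>
        (\<forall>S\<in>\<T>. \<forall>x v. reads S x v \<longrightarrow>
           (\<exists>T. T \<in> WriteTx \<T> x \<and> (T, S) \<in> ord \<and>
                (\<forall>T'\<in>WriteTx \<T> x. (T', S) \<in> ord \<longrightarrow> T' = T \<or> (T', T) \<in> ord) \<and>
                writes T x v)))"

datatype 'k elabel = SOe | WRe 'k | WWe 'k | RWe 'k

type_synonym ('k, 'v) edge = "('k, 'v) txn \<times> 'k elabel \<times> ('k, 'v) txn"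

type_synonym ('k, 'v) hpolygraph =
  "('k, 'v) txn set \<times> ('k, 'v) edge set \<times> ('k, 'v) edge set set \<times> ('k, 'v) edge set set"

definition known_edges ::
  "('k, 'v) txn set \<Rightarrow> (('k, 'v) txn \<times> ('k, 'v) txn) set \<Rightarrow> ('k, 'v) edge set" where
  "known_edges \<T> SO =
     {(T, SOe, S) | T S. (T, S) \<in> SO} \<union>
     {(T, WRe x, S) | T S x. \<exists>v. S \<in> \<T> \<and> reads S x v \<and> T \<in> \<T> \<and> writes T x v \<and>
                           (\<forall>T'\<in>\<T>. writes T' x v \<longrightarrow> T' = T)}"

definition C_WW :: "('k, 'v) txn set \<Rightarrow> ('k, 'v) edge set set" where
  "C_WW \<T> = {{(T, WWe x, S), (S, WWe x, T)} | x T S.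
               T \<in> WriteTx \<T> x \<and> S \<in> WriteTx \<T> x \<and> T \<noteq> S}"

definition C_WR :: "('k, 'v) txn set \<Rightarrow> ('k, 'v) edge set set" where
  "C_WR \<T> = {{(Ti, WRe x, S) | Ti. Ti \<in> \<T> \<and> writes Ti x v} | S x v. S \<in> \<T> \<and> reads S x v}"

definition hyper_polygraph ::
  "('k, 'v) txn set \<Rightarrow> (('k, 'v) txn \<times> ('k, 'v) txn) set \<Rightarrow> ('k, 'v) hpolygraph" where
  "hyper_polygraph \<T> SO = (\<T>, known_edges \<T> SO, C_WW \<T>, C_WR \<T>)"

definition labeled_graph :: "('k, 'v) txn set \<Rightarrow> ('k, 'v) edge set \<Rightarrow> bool" where
  "labeled_graph V E \<longleftrightarrow> (\<forall>(a, l, b)\<in>E. a \<in> V \<and> b \<in> V)"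

definition compatible ::
  "('k, 'v) txn set \<Rightarrow> ('k, 'v) edge set \<Rightarrow> ('k, 'v) hpolygraph \<Rightarrow> bool" where
  "compatible V' E' G \<longleftrightarrow>
     (case G of (V, E, CWW, CWR) \<Rightarrow>
        V' = V \<and> E \<subseteq> E' \<and>
        (\<forall>x T T' S. T \<noteq> S \<longrightarrow> (T', WRe x, T) \<in> E' \<longrightarrow> (T', WWe x, S) \<in> E'
                     \<longrightarrow> (T, RWe x, S) \<in> E') \<and>
        (\<forall>C\<in>CWW \<union> CWR. \<exists>!e. e \<in> E' \<inter> C))"

definition acyclic_lg :: "('k, 'v) edge set \<Rightarrow> bool" where
  "acyclic_lg E \<longleftrightarrow> acyclic {(a, b). \<exists>l. (a, l, b) \<in> E}"

end

theory Submission
  imports Defs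
begin

text \<open>A serialization order \<open>\<prec>\<close> yields a compatible graph whose edges all lie in \<open>\<prec>\<close>: SO
  edges, WR edges from the \<open>\<prec>\<close>-last writer, WW edges in \<open>\<prec>\<close>-order, and the induced RW edges,
  which point forward because a reader precedes every overwrite of the version it reads.
  Conversely, an acyclic compatible graph over the finite set of transactions has a linear
  extension \<open>\<prec>\<close>; the WR edge chosen for a read then comes from the \<open>\<prec>\<close>-last writer, since a
  later writer preceding the reader would create a WW edge and hence a backward RW edge.\<close>

(* Transactions are pairs (O, po) that are never taken apart; splitting them only bloats goals. *)
declare split_paired_All [simp del] split_paired_Ex [simp del]

type_synonym ('k, 'v) txn_rel = "(('k, 'v) txn \<times> ('k, 'v) txn) set"

lemma strict_total_on_asym: "strict_total_on A r \<Longrightarrow> (a, b) \<in> r \<Longrightarrow> (b, a) \<notin> r"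
  unfolding strict_total_on_def irrefl_def trans_def by blast

lemma strict_total_on_acyclic: "strict_total_on A r \<Longrightarrow> acyclic r"
  unfolding strict_total_on_def acyclic_def irrefl_def by (simp add: trancl_id)

lemma finite_acyclic_extends_to_strict_total_on:
  assumes "finite A" and "r \<subseteq> A \<times> A" and "acyclic r"
  shows "\<exists>ord. strict_total_on A ord \<and> r \<subseteq> ord"
  using assms
proof (induction A arbitrary: r rule: finite_remove_induct)
  case empty
  then show ?case by (auto simp: strict_total_on_def irrefl_def trans_def)
next
  case (remove A)
  have "wf (r\<inverse>)"
    using remove.prems remove.hyps(1) finite_subset finite_acyclic_wf_converse by blast
  then obtain m where "m \<in> A" and m_maximal: "\<And>y. (m, y) \<in> r \<Longrightarrow> y \<notin> A"
    using remove.hyps(2) wfE_min by (metis converseI ex_in_conv)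
  have "acyclic (r \<inter> (A - {m}) \<times> (A - {m}))"
    using remove.prems(2) acyclic_subset by blast
  then obtain ord where ord: "strict_total_on (A - {m}) ord" "r \<inter> (A - {m}) \<times> (A - {m}) \<subseteq> ord"
    using remove.IH[OF \<open>m \<in> A\<close>] by blast
  have "(a, a) \<notin> r" for a
    using remove.prems(2) by (meson acyclic_irrefl irrefl_def r_into_trancl)
  then have "r \<subseteq> ord \<union> (A - {m}) \<times> {m}"
    using remove.prems(1) m_maximal ord(2) by blast
  moreover have "strict_total_on A (ord \<union> (A - {m}) \<times> {m})"
    using ord(1) \<open>m \<in> A\<close> unfolding strict_total_on_def irrefl_def trans_def by blast
  ultimately show ?case by blast
qed

definition edge_relation :: "('k, 'v) edge set \<Rightarrow> ('k, 'v) txn_rel" where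
  "edge_relation E = {(a, b). \<exists>l. (a, l, b) \<in> E}"

lemma edge_relationI: "(a, l, b) \<in> E \<Longrightarrow> (a, b) \<in> edge_relation E"
  unfolding edge_relation_def by blast

lemma labeled_graph_iff_edge_relation: "labeled_graph V E \<longleftrightarrow> edge_relation E \<subseteq> V \<times> V"
  unfolding labeled_graph_def edge_relation_def by fast

lemma acyclic_lg_iff_edge_relation: "acyclic_lg E \<longleftrightarrow> acyclic (edge_relation E)"
  unfolding acyclic_lg_def edge_relation_def ..

lemma compatible_hyper_polygraph_iff:
  "compatible V E (hyper_polygraph \<T> SO) \<longleftrightarrow> V = \<T> \<and> known_edges \<T> SO \<subseteq> E \<and>
     (\<forall>x T W S. T \<noteq> S \<longrightarrow> (W, WRe x, T) \<in> E \<longrightarrow> (W, WWe x, S) \<in> E \<longrightarrow> (T, RWe x, S) \<in> E) \<and>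
     (\<forall>C\<in>C_WW \<T> \<union> C_WR \<T>. \<exists>!e. e \<in> E \<inter> C)"
  by (simp add: compatible_def hyper_polygraph_def)

lemma compatible_hyper_polygraphD:
  assumes "compatible V E (hyper_polygraph \<T> SO)"
  shows "V = \<T>" and "known_edges \<T> SO \<subseteq> E"
    and "T \<noteq> S \<Longrightarrow> (W, WRe x, T) \<in> E \<Longrightarrow> (W, WWe x, S) \<in> E \<Longrightarrow> (T, RWe x, S) \<in> E"
    and "C \<in> C_WW \<T> \<Longrightarrow> \<exists>!e. e \<in> E \<inter> C" and "C \<in> C_WR \<T> \<Longrightarrow> \<exists>!e. e \<in> E \<inter> C"
  using assms by (simp_all add: compatible_hyper_polygraph_iff)

lemma C_WW_memI:
  "T \<in> WriteTx \<T> x \<Longrightarrow> S \<in> WriteTx \<T> x \<Longrightarrow> T \<noteq> S \<Longrightarrow> {(T, WWe x, S), (S, WWe x, T)} \<in> C_WW \<T>"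
  unfolding C_WW_def by blast

lemma C_WR_memI:
  "S \<in> \<T> \<Longrightarrow> reads S x v \<Longrightarrow> {(T, WRe x, S) | T. T \<in> \<T> \<and> writes T x v} \<in> C_WR \<T>"
  unfolding C_WR_def by blast

definition last_writer_before ::
  "('k, 'v) txn_rel \<Rightarrow> ('k, 'v) txn set \<Rightarrow> 'k \<Rightarrow> ('k, 'v) txn \<Rightarrow> ('k, 'v) txn \<Rightarrow> bool"
where
  "last_writer_before ord \<T> x S T \<longleftrightarrow> T \<in> WriteTx \<T> x \<and> (T, S) \<in> ord \<and>
     (\<forall>T'\<in>WriteTx \<T> x. (T', S) \<in> ord \<longrightarrow> T' = T \<or> (T', T) \<in> ord)"

definition serialization_order :: "('k, 'v) txn set \<Rightarrow> ('k, 'v) txn_rel \<Rightarrow> ('k, 'v) txn_rel \<Rightarrow> bool"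
where
  "serialization_order \<T> SO ord \<longleftrightarrow> strict_total_on \<T> ord \<and> SO \<subseteq> ord \<and>
     (\<forall>S\<in>\<T>. \<forall>x v. reads S x v \<longrightarrow> (\<exists>T. last_writer_before ord \<T> x S T \<and> writes T x v))"

lemma serializable_iff_serialization_order:
  "serializable \<T> SO \<longleftrightarrow> Int_consistent \<T> \<and> (\<exists>ord. serialization_order \<T> SO ord)"
  unfolding serializable_def serialization_order_def last_writer_before_def by blast

lemma last_writer_before_unique:
  "strict_total_on \<T> ord \<Longrightarrow> last_writer_before ord \<T> x S T \<Longrightarrow> last_writer_before ord \<T> x S T'
    \<Longrightarrow> T' = T"
  unfolding last_writer_before_def by (metis strict_total_on_asym)

lemma last_writer_before_in_txns: "last_writer_before ord \<T> x S T \<Longrightarrow> T \<in> \<T>"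
  unfolding last_writer_before_def WriteTx_def by blast

lemma reader_precedes_overwriter:
  assumes ord: "strict_total_on \<T> ord"
    and last: "last_writer_before ord \<T> x R W"
    and "R \<in> \<T>" and S: "S \<in> WriteTx \<T> x" "(W, S) \<in> ord" and "R \<noteq> S"
  shows "(R, S) \<in> ord"
proof (rule ccontr)
  assume "(R, S) \<notin> ord"
  moreover have "S \<in> \<T>" using S(1) by (simp add: WriteTx_def)
  ultimately have "(S, R) \<in> ord"
    using ord \<open>R \<in> \<T>\<close> \<open>R \<noteq> S\<close> unfolding strict_total_on_def by blast
  then have "S = W \<or> (S, W) \<in> ord" using last S(1) by (simp add: last_writer_before_def)
  then show False using S(2) ord by (metis strict_total_on_asym)
qed

definition with_rw_edges :: "('k, 'v) edge set \<Rightarrow> ('k, 'v) edge set" where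
  "with_rw_edges E = E \<union>
     {(T, RWe x, S) | T S x. T \<noteq> S \<and> (\<exists>W. (W, WRe x, T) \<in> E \<and> (W, WWe x, S) \<in> E)}"

lemma with_rw_edges_WRe [simp]: "(a, WRe x, b) \<in> with_rw_edges E \<longleftrightarrow> (a, WRe x, b) \<in> E"
  and with_rw_edges_WWe [simp]: "(a, WWe x, b) \<in> with_rw_edges E \<longleftrightarrow> (a, WWe x, b) \<in> E"
  by (auto simp: with_rw_edges_def)

definition serialization_graph ::
  "('k, 'v) txn set \<Rightarrow> ('k, 'v) txn_rel \<Rightarrow> ('k, 'v) txn_rel \<Rightarrow> ('k, 'v) edge set"
where
  "serialization_graph \<T> SO ord = with_rw_edges
     ({(T, SOe, S) | T S. (T, S) \<in> SO} \<union>
      {(T, WRe x, S) | T S x. S \<in> \<T> \<and> (\<exists>v. reads S x v) \<and> last_writer_before ord \<T> x S T} \<union>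
      {(T, WWe x, S) | T S x. T \<in> WriteTx \<T> x \<and> S \<in> WriteTx \<T> x \<and> (T, S) \<in> ord})"

lemma serialization_graph_SOe:
  "(T, SOe, S) \<in> serialization_graph \<T> SO ord \<longleftrightarrow> (T, S) \<in> SO"
  by (simp add: serialization_graph_def with_rw_edges_def)

lemma serialization_graph_WRe:
  "(T, WRe x, S) \<in> serialization_graph \<T> SO ord \<longleftrightarrow>
     S \<in> \<T> \<and> (\<exists>v. reads S x v) \<and> last_writer_before ord \<T> x S T"
  by (simp add: serialization_graph_def)

lemma serialization_graph_WWe:
  "(T, WWe x, S) \<in> serialization_graph \<T> SO ord \<longleftrightarrow>
     T \<in> WriteTx \<T> x \<and> S \<in> WriteTx \<T> x \<and> (T, S) \<in> ord"
  by (simp add: serialization_graph_def)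

lemma serialization_graph_RWe:
  "(T, RWe x, S) \<in> serialization_graph \<T> SO ord \<longleftrightarrow> T \<noteq> S \<and>
     (\<exists>W. (W, WRe x, T) \<in> serialization_graph \<T> SO ord \<and>
          (W, WWe x, S) \<in> serialization_graph \<T> SO ord)"
  unfolding serialization_graph_def with_rw_edges_WRe with_rw_edges_WWe
  by (simp add: with_rw_edges_def)

lemma serialization_graph_edge_relation:
  assumes ord: "serialization_order \<T> SO ord"
  shows "edge_relation (serialization_graph \<T> SO ord) \<subseteq> ord"
proof (rule subrelI)
  fix a b assume "(a, b) \<in> edge_relation (serialization_graph \<T> SO ord)"
  then obtain l where e: "(a, l, b) \<in> serialization_graph \<T> SO ord"
    unfolding edge_relation_def by blast
  have sto: "strict_total_on \<T> ord" and "SO \<subseteq> ord"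
    using ord by (simp_all add: serialization_order_def)
  show "(a, b) \<in> ord"
  proof (cases l)
    case SOe
    then show ?thesis using e \<open>SO \<subseteq> ord\<close> by (auto simp: serialization_graph_SOe)
  next
    case (WRe x)
    then show ?thesis using e by (simp add: serialization_graph_WRe last_writer_before_def)
  next
    case (WWe x)
    then show ?thesis using e by (simp add: serialization_graph_WWe)
  next
    case (RWe x)
    then obtain W where "a \<noteq> b" "a \<in> \<T>" "last_writer_before ord \<T> x a W"
      "b \<in> WriteTx \<T> x" "(W, b) \<in> ord"
      using e by (auto simp: serialization_graph_RWe serialization_graph_WRe serialization_graph_WWe)
    then show ?thesis using reader_precedes_overwriter[OF sto] by blast
  qed
qed

lemma serialization_graph_known_edges:
  assumes ord: "serialization_order \<T> SO ord"
  shows "known_edges \<T> SO \<subseteq> serialization_graph \<T> SO ord"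
proof
  fix e assume "e \<in> known_edges \<T> SO"
  then consider T S where "e = (T, SOe, S)" "(T, S) \<in> SO"
    | T S x v where "e = (T, WRe x, S)" "S \<in> \<T>" "reads S x v" "T \<in> \<T>" "writes T x v"
        "\<forall>T'\<in>\<T>. writes T' x v \<longrightarrow> T' = T"
    unfolding known_edges_def by blast
  then show "e \<in> serialization_graph \<T> SO ord"
  proof cases
    case 1
    then show ?thesis by (simp add: serialization_graph_SOe)
  next
    case 2
    obtain W where W: "last_writer_before ord \<T> x S W" "writes W x v"
      using ord 2(2,3) unfolding serialization_order_def by blast
    then have "W = T" using 2(6) last_writer_before_in_txns[OF W(1)] by blast
    then show ?thesis
      unfolding 2(1) serialization_graph_WRe using 2(2,3) W by blast
  qed
qed

lemma serialization_graph_ex1_C_WW: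
  assumes sto: "strict_total_on \<T> ord" and "C \<in> C_WW \<T>"
  shows "\<exists>!e. e \<in> serialization_graph \<T> SO ord \<inter> C"
proof -
  obtain x T S where C: "C = {(T, WWe x, S), (S, WWe x, T)}"
    and writers: "T \<in> WriteTx \<T> x" "S \<in> WriteTx \<T> x" "T \<noteq> S"
    using \<open>C \<in> C_WW \<T>\<close> unfolding C_WW_def by blast
  then have "(T, S) \<in> ord \<or> (S, T) \<in> ord"
    using sto unfolding strict_total_on_def WriteTx_def by blast
  then have "(T, WWe x, S) \<in> serialization_graph \<T> SO ord \<and> (S, WWe x, T) \<notin> serialization_graph \<T> SO ord
      \<or> (S, WWe x, T) \<in> serialization_graph \<T> SO ord \<and> (T, WWe x, S) \<notin> serialization_graph \<T> SO ord"
    unfolding serialization_graph_WWe using writers strict_total_on_asym[OF sto] by blast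
  then show ?thesis unfolding C by blast
qed

lemma serialization_graph_ex1_C_WR:
  assumes ord: "serialization_order \<T> SO ord" and "C \<in> C_WR \<T>"
  shows "\<exists>!e. e \<in> serialization_graph \<T> SO ord \<inter> C"
proof -
  let ?E = "serialization_graph \<T> SO ord"
  have sto: "strict_total_on \<T> ord" using ord by (simp add: serialization_order_def)
  obtain S x v where C: "C = {(T, WRe x, S) | T. T \<in> \<T> \<and> writes T x v}"
    and "S \<in> \<T>" "reads S x v"
    using \<open>C \<in> C_WR \<T>\<close> unfolding C_WR_def by blast
  then obtain T where T: "last_writer_before ord \<T> x S T" "writes T x v"
    using ord unfolding serialization_order_def by blast
  moreover have "T \<in> \<T>" using T(1) by (rule last_writer_before_in_txns)
  ultimately have "(T, WRe x, S) \<in> ?E \<inter> C"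
    unfolding C using \<open>S \<in> \<T>\<close> \<open>reads S x v\<close> by (simp add: serialization_graph_WRe) blast
  moreover have "e = (T, WRe x, S)" if "e \<in> ?E \<inter> C" for e
  proof -
    obtain T' where e: "e = (T', WRe x, S)"
      using \<open>e \<in> ?E \<inter> C\<close> unfolding C by blast
    then have "last_writer_before ord \<T> x S T'"
      using \<open>e \<in> ?E \<inter> C\<close> by (simp add: serialization_graph_WRe)
    then show ?thesis using e last_writer_before_unique[OF sto T(1)] by blast
  qed
  ultimately show ?thesis by blast
qed

lemma serialization_graph_compatible:
  assumes ord: "serialization_order \<T> SO ord"
  shows "compatible \<T> (serialization_graph \<T> SO ord) (hyper_polygraph \<T> SO)"
proof -
  have sto: "strict_total_on \<T> ord" using ord by (simp add: serialization_order_def)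
  have RW_closed: "(T, RWe x, S) \<in> serialization_graph \<T> SO ord"
    if "T \<noteq> S" "(W, WRe x, T) \<in> serialization_graph \<T> SO ord"
      "(W, WWe x, S) \<in> serialization_graph \<T> SO ord" for T S W x
    unfolding serialization_graph_RWe using that by blast
  show ?thesis
    unfolding compatible_hyper_polygraph_iff
    using serialization_graph_known_edges[OF ord] RW_closed
      serialization_graph_ex1_C_WW[OF sto] serialization_graph_ex1_C_WR[OF ord] by blast
qed

lemma serialization_order_acyclic_compatible_graph:
  assumes ord: "serialization_order \<T> SO ord"
  shows "\<exists>V E. labeled_graph V E \<and> acyclic_lg E \<and> compatible V E (hyper_polygraph \<T> SO)"
proof -
  let ?E = "serialization_graph \<T> SO ord"
  have sto: "strict_total_on \<T> ord" using ord by (simp add: serialization_order_def)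
  have "ord \<subseteq> \<T> \<times> \<T>" using sto by (simp add: strict_total_on_def)
  then have "labeled_graph \<T> ?E"
    unfolding labeled_graph_iff_edge_relation
    using serialization_graph_edge_relation[OF ord] by (rule order_trans[rotated])
  moreover have "acyclic_lg ?E"
    unfolding acyclic_lg_iff_edge_relation
    using strict_total_on_acyclic[OF sto] serialization_graph_edge_relation[OF ord]
    by (rule acyclic_subset)
  ultimately show ?thesis using serialization_graph_compatible[OF ord] by blast
qed

lemma compatible_WRe_from_last_writer:
  assumes comp: "compatible \<T> E (hyper_polygraph \<T> SO)"
    and ord: "strict_total_on \<T> ord" and edges: "edge_relation E \<subseteq> ord"
    and wr: "(T, WRe x, S) \<in> E" and T: "T \<in> WriteTx \<T> x"
  shows "last_writer_before ord \<T> x S T"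
proof -
  have later_writer: "T' = T \<or> (T', T) \<in> ord" if T': "T' \<in> WriteTx \<T> x" "(T', S) \<in> ord" for T'
  proof (rule ccontr)
    assume not_before: "\<not> (T' = T \<or> (T', T) \<in> ord)"
    then have "\<exists>!e. e \<in> E \<inter> {(T, WWe x, T'), (T', WWe x, T)}"
      using compatible_hyper_polygraphD(4)[OF comp] C_WW_memI[OF T T'(1)] by blast
    moreover have "(T', WWe x, T) \<notin> E" using edges edge_relationI not_before by blast
    ultimately have "(T, WWe x, T') \<in> E" by blast
    moreover have "S \<noteq> T'" using T'(2) strict_total_on_asym[OF ord] by blast
    ultimately have "(S, RWe x, T') \<in> E"
      using compatible_hyper_polygraphD(3)[OF comp] wr by blast
    then show False using edges edge_relationI T'(2) strict_total_on_asym[OF ord] by blast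
  qed
  have "(T, S) \<in> ord" using edges edge_relationI wr by blast
  then show ?thesis unfolding last_writer_before_def using T later_writer by blast
qed

lemma compatible_edges_serialization_order:
  assumes comp: "compatible \<T> E (hyper_polygraph \<T> SO)"
    and ord: "strict_total_on \<T> ord" and edges: "edge_relation E \<subseteq> ord"
  shows "serialization_order \<T> SO ord"
proof -
  have "SO \<subseteq> ord"
  proof (rule subrelI)
    fix T S assume "(T, S) \<in> SO"
    then have "(T, SOe, S) \<in> E"
      using compatible_hyper_polygraphD(2)[OF comp] unfolding known_edges_def by blast
    then show "(T, S) \<in> ord" using edges edge_relationI by blast
  qed
  moreover have "\<exists>T. last_writer_before ord \<T> x S T \<and> writes T x v"
    if S: "S \<in> \<T>" "reads S x v" for S x v
  proof -
    obtain T where "(T, WRe x, S) \<in> E" "T \<in> \<T>" "writes T x v"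
      using compatible_hyper_polygraphD(5)[OF comp C_WR_memI[OF S]] by blast
    moreover from this have "T \<in> WriteTx \<T> x" unfolding WriteTx_def by blast
    ultimately show ?thesis
      using compatible_WRe_from_last_writer[OF comp ord edges] by blast
  qed
  ultimately show ?thesis using ord by (simp add: serialization_order_def)
qed

lemma acyclic_compatible_serialization_order:
  assumes "finite \<T>" and "labeled_graph V E" and "acyclic_lg E"
    and comp: "compatible V E (hyper_polygraph \<T> SO)"
  shows "\<exists>ord. serialization_order \<T> SO ord"
proof -
  have "V = \<T>" using comp by (rule compatible_hyper_polygraphD(1))
  then have "edge_relation E \<subseteq> \<T> \<times> \<T>"
    using \<open>labeled_graph V E\<close> by (simp add: labeled_graph_iff_edge_relation)
  then obtain ord where "strict_total_on \<T> ord" "edge_relation E \<subseteq> ord"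
    using finite_acyclic_extends_to_strict_total_on \<open>finite \<T>\<close> \<open>acyclic_lg E\<close>
    unfolding acyclic_lg_iff_edge_relation by blast
  then show ?thesis
    using compatible_edges_serialization_order comp unfolding \<open>V = \<T>\<close> by blast
qed

theorem theorem3p5:
  fixes \<T> :: "('k, 'v) txn set"
    and SO :: "(('k, 'v) txn \<times> ('k, 'v) txn) set"
    and Tb :: "('k, 'v) txn"
  assumes "is_history \<T> SO Tb"
  shows "serializable \<T> SO \<longleftrightarrow>
           Int_consistent \<T> \<and>
           (\<exists>V' E'. labeled_graph V' E' \<and> acyclic_lg E' \<and>
                    compatible V' E' (hyper_polygraph \<T> SO))"
proof -
  have "finite \<T>" using assms by (simp add: is_history_def)
  then show ?thesis
    unfolding serializable_iff_serialization_order
    using serialization_order_acyclic_compatible_graph acyclic_compatible_serialization_order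
    by blast
qed

end
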